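(* Let $m\ge2$ be even. For integers $i\ge0$ and even $n\ge 2$ define, as functions of $(s,t)$, $$\tilde f_n^i(s,t)=-\sqrt{\tfrac{\pi}{2}}\sum_{\ell=0}^{\lfloor (i-1)/2\rfloor}s^{i-1-2\ell}\frac{1}{2^\ell\ell!}\frac{\Gamma(i+1)}{\Gamma(i-2\ell)}\widetilde J_{(n-2\ell-3)/2}(t)\quad(i\ge1),$$ $$\hat f_n^i(s,t)=(-1)^{n/2+i}\sqrt{\tfrac{\pi}{2}}\sum_{\ell=0}^{\lfloor i/2\rfloor}s^{i-2\ell}\frac{1}{2^\ell\ell!}\frac{\Gamma(i+1)}{\Gamma(i+1-2\ell)}\widetilde J_{(n-2\ell-3)/2}(t),$$ $$g_n^i(s,t)=\sqrt{\tfrac{\pi}{2}}\sum_{\ell=0}^{\lfloor i/2\rfloor}s^{i-2\ell}\frac{1}{2^\ell\ell!}\frac{\Gamma(i+1)}{\Gamma(i+1-2\ell)}\widetilde J_{(n-2\ell-1)/2}(t).$$ Then for every $i$ with $1\le i\le m-2$, $$\tilde f_{m+2}^{i+1}=\frac{i+1}{i}z^{-1}\partial_w\tilde f_m^i,\qquad \hat f_{m+2}^{i+1}=z^{-1}\partial_w\hat f_m^i,\qquad g_{m+2}^{i+1}=-\frac{1}{i+1}z^{-1}\partial_w\tilde f_{m+2}^{i+1},$$ and moreover $$\hat f_{m+2}^1=z^{-1}\partial_w\hat f_m^0,\qquad \tilde f_{m+2}^1=(-1)^{m/2-1}s^{-1}\hat f_{m+2}^1,\qquad g_{m+2}^1=-z^{-1}\partial_w\tilde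 f_{m+2}^1.$$
   Context: $\widetilde J_\alpha(t)=t^{-\alpha}J_\alpha(t)$ with $J_\alpha$ the Bessel function (for $\alpha\ge-1/2$ this is an entire even function of $t$). The variables are related by $s=zw$ and $t=z\sqrt{1-w^2}$, where (in the application) $s=\langle\underline{x},\underline{y}\rangle$, $t=|\underline{x}\wedge\underline{y}|=\sqrt{|\underline{x}|^2|\underline{y}|^2-s^2}$, $z=|\underline{x}||\underline{y}|$, $w=\langle\underline{x}/|\underline{x}|,\underline{y}/|\underline{y}|\rangle$. The operator $z^{-1}\partial_w$ means: regard a function of $(s,t)$ as a function of $(w,z)$ via these substitutions, differentiate with respect to $w$ at fixed $z$, and divide by $z$. *)

theory Defs
  imports "HOL-Analysis.Analysis"
begin

text \<open>Normalised Bessel function: Jt a t = t^(-a) J_a(t), written via the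
  power series of J_a, so that it is the entire even function of t.\<close>
definition Jt :: "real \<Rightarrow> real \<Rightarrow> real" where
  "Jt a t = (\<Sum>k. (-1)^k / (fact k * Gamma (real k + a + 1)) * (t / 2) ^ (2 * k)) / 2 powr a"

definition ftilde :: "nat \<Rightarrow> nat \<Rightarrow> real \<Rightarrow> real \<Rightarrow> real" where
  "ftilde n i s t = - sqrt (pi / 2) *
     (\<Sum>l = 0..(i - 1) div 2. s ^ (i - 1 - 2 * l) * (1 / (2 ^ l * fact l))
        * (Gamma (real i + 1) / Gamma (real i - 2 * real l))
        * Jt ((real n - 2 * real l - 3) / 2) t)"

definition fhat :: "nat \<Rightarrow> nat \<Rightarrow> real \<Rightarrow> real \<Rightarrow> real" where
  "fhat n i s t = (-1) ^ (n div 2 + i) * sqrt (pi / 2) *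
     (\<Sum>l = 0..i div 2. s ^ (i - 2 * l) * (1 / (2 ^ l * fact l))
        * (Gamma (real i + 1) / Gamma (real i + 1 - 2 * real l))
        * Jt ((real n - 2 * real l - 3) / 2) t)"

definition g :: "nat \<Rightarrow> nat \<Rightarrow> real \<Rightarrow> real \<Rightarrow> real" where
  "g n i s t = sqrt (pi / 2) *
     (\<Sum>l = 0..i div 2. s ^ (i - 2 * l) * (1 / (2 ^ l * fact l))
        * (Gamma (real i + 1) / Gamma (real i + 1 - 2 * real l))
        * Jt ((real n - 2 * real l - 1) / 2) t)"

definition zdw :: "(real \<Rightarrow> real \<Rightarrow> real) \<Rightarrow> real \<Rightarrow> real \<Rightarrow> real" where
  "zdw F w z = (1 / z) * deriv (\<lambda>v. F (z * v) (z * sqrt (1 - v^2))) w"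

end

theory Submission
  imports Defs
begin

(* With s = z w and t = z sqrt (1 - w^2) one has ds/dw = z and t dt/dw = - z s, so the Bessel
   identity d/dt Jt a t = - t Jt (a + 1) t turns z^-1 d/dw into
     s^p Jt a t  |->  p s^(p-1) Jt a t + s^(p+1) Jt (a + 1) t.
   All of ftilde, fhat and g are constant multiples of
     P k a = sum_l c(k,l) s^(k-2l) Jt (a - l) t,   c(k,l) = k! / (2^l l! (k-2l)!),
   the number of ways to choose l disjoint pairs among k points.  Splitting according to whether
   the last of k + 1 points is paired gives c(k+1,l+1) = (k-2l) c(k,l) + c(k,l+1), and this is
   exactly what makes z^-1 d/dw map P k a to P (k+1) (a+1). *)

lemma Gamma_real_ge_1: "x \<ge> 2 \<Longrightarrow> Gamma (x::real) \<ge> 1"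
  using Gamma_real_strict_mono[of 2 x] Gamma_fact[of 1, where 'a=real]
  by (cases "x = 2") (auto simp: numeral_2_eq_2)

definition bessel_coeff :: "real \<Rightarrow> nat \<Rightarrow> real" where
  "bessel_coeff a k = (-1)^k / (fact k * Gamma (real k + a + 1))"

definition bessel_series :: "real \<Rightarrow> real \<Rightarrow> real" where
  "bessel_series a u = (\<Sum>k. bessel_coeff a k * u ^ k)"

lemma summable_bessel_coeff: "summable (\<lambda>k. bessel_coeff a k * u ^ k)"
proof (rule summable_comparison_test')
  show "summable (\<lambda>k. inverse (fact k) * \<bar>u\<bar> ^ k)"
    using summable_exp[of "\<bar>u\<bar>"] .
  fix k :: nat
  assume "k \<ge> nat \<lceil>2 - a\<rceil>"
  then have Gamma_ge: "Gamma (real k + a + 1) \<ge> 1"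
    by (intro Gamma_real_ge_1) linarith
  then have "norm (bessel_coeff a k * u ^ k) = \<bar>u\<bar> ^ k / (fact k * Gamma (real k + a + 1))"
    by (simp add: bessel_coeff_def abs_mult power_abs)
  also have "\<dots> \<le> \<bar>u\<bar> ^ k / fact k"
    using Gamma_ge by (intro divide_left_mono) auto
  finally show "norm (bessel_coeff a k * u ^ k) \<le> inverse (fact k) * \<bar>u\<bar> ^ k"
    by (simp add: field_simps)
qed

lemma diffs_bessel_coeff: "diffs (bessel_coeff a) = (\<lambda>k. - bessel_coeff (a + 1) k)"
proof
  fix k
  have "Gamma (real (Suc k) + a + 1) = Gamma (real k + (a + 1) + 1)"
    by (simp add: add_ac)
  then show "diffs (bessel_coeff a) k = - bessel_coeff (a + 1) k"
    unfolding diffs_def bessel_coeff_def fact_Suc by simp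
qed

lemma has_real_derivative_bessel_series:
  "(bessel_series a has_real_derivative - bessel_series (a + 1) u) (at u)"
proof -
  have "(bessel_series a has_real_derivative (\<Sum>k. diffs (bessel_coeff a) k * u ^ k)) (at u)"
    unfolding bessel_series_def
    by (intro termdiffs_strong_converges_everywhere summable_bessel_coeff)
  also have "(\<Sum>k. diffs (bessel_coeff a) k * u ^ k) = - bessel_series (a + 1) u"
    using suminf_minus[OF summable_bessel_coeff[of "a + 1" u]]
    by (simp add: diffs_bessel_coeff bessel_series_def)
  finally show ?thesis .
qed

lemma Jt_eq_bessel_series: "Jt a t = bessel_series a ((t / 2)\<^sup>2) / 2 powr a"
  by (simp add: Jt_def bessel_series_def bessel_coeff_def power_mult)

lemma has_real_derivative_Jt: "(Jt a has_real_derivative - t * Jt (a + 1) t) (at t)"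
proof -
  have "((\<lambda>t. bessel_series a ((t / 2)\<^sup>2) / 2 powr a) has_real_derivative
          - bessel_series (a + 1) ((t / 2)\<^sup>2) * (2 * (t / 2) * (1 / 2)) / 2 powr a) (at t)"
    by (auto intro!: derivative_eq_intros DERIV_chain2[OF has_real_derivative_bessel_series])
  also have "- bessel_series (a + 1) ((t / 2)\<^sup>2) * (2 * (t / 2) * (1 / 2)) / 2 powr a
      = - t * Jt (a + 1) t"
    by (simp add: Jt_eq_bessel_series powr_add field_simps)
  finally show ?thesis
    by (simp add: Jt_eq_bessel_series[abs_def])
qed

definition pairings :: "nat \<Rightarrow> nat \<Rightarrow> real" where
  "pairings k l = real (k choose (2 * l)) * (fact (2 * l) / (2 ^ l * fact l))"

lemma pairings_0 [simp]: "pairings k 0 = 1"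
  by (simp add: pairings_def)

lemma pairings_eq_0: "k < 2 * l \<Longrightarrow> pairings k l = 0"
  by (simp add: pairings_def)

lemma pairings_fact:
  "2 * l \<le> k \<Longrightarrow> pairings k l = fact k / (2 ^ l * fact l * fact (k - 2 * l))"
  by (simp add: pairings_def binomial_fact field_simps)

lemma binomial_absorb_comp_Suc: "(n - k) * (n choose k) = Suc k * (n choose Suc k)"
  by (simp only: binomial_absorb_comp binomial_absorption)

lemma pairings_Suc_Suc:
  "pairings (Suc k) (Suc l) = real (k - 2 * l) * pairings k l + pairings k (Suc l)"
proof -
  define d :: real where "d = fact (2 * l) / (2 ^ l * fact l)"
  have double_Suc: "fact (2 * Suc l) / (2 ^ Suc l * fact (Suc l)) = real (Suc (2 * l)) * d"
  proof -
    have "fact (2 * Suc l) = real (Suc (Suc (2 * l))) * (real (Suc (2 * l)) * fact (2 * l) :: real)"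
      by (simp only: mult_Suc_right add_2_eq_Suc fact_Suc of_nat_mult)
    moreover have "2 ^ Suc l * fact (Suc l) = real (Suc (Suc (2 * l))) * (2 ^ l * fact l :: real)"
      by simp
    ultimately show ?thesis
      unfolding d_def by (simp only: mult_divide_mult_cancel_left of_nat_eq_0_iff Suc_neq_Zero
        not_False_eq_True times_divide_eq_right)
  qed
  have "Suc k choose (2 * Suc l) = (k choose Suc (2 * l)) + (k choose (2 * Suc l))"
    by (simp add: mult_Suc_right add_2_eq_Suc)
  then have "pairings (Suc k) (Suc l)
      = real (Suc (2 * l) * (k choose Suc (2 * l))) * d + real (k choose (2 * Suc l)) * (real (Suc (2 * l)) * d)"
    unfolding pairings_def double_Suc by (simp add: algebra_simps)
  also have "\<dots> = real (k - 2 * l) * pairings k l + pairings k (Suc l)"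
    unfolding pairings_def double_Suc d_def binomial_absorb_comp_Suc[symmetric] by simp
  finally show ?thesis .
qed

lemma pairings_Suc_Suc_monomial:
  "pairings (Suc k) (Suc l) * s ^ (Suc k - 2 * Suc l)
    = real (k - 2 * l) * pairings k l * s ^ (k - 2 * l - 1) + pairings k (Suc l) * s ^ (k - 2 * Suc l + 1)"
proof -
  consider "Suc (Suc (2 * l)) \<le> k" | "k = Suc (2 * l)" | "k \<le> 2 * l"
    by linarith
  then show ?thesis
  proof cases
    case 1
    then have "Suc k - 2 * Suc l = k - 2 * l - 1" "k - 2 * Suc l + 1 = k - 2 * l - 1"
      by auto
    then show ?thesis
      by (simp add: pairings_Suc_Suc algebra_simps)
  next
    case 2
    then show ?thesis
      by (simp add: pairings_Suc_Suc pairings_eq_0)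
  qed (simp add: pairings_eq_0)
qed

definition bessel_poly :: "nat \<Rightarrow> real \<Rightarrow> real \<Rightarrow> real \<Rightarrow> real" where
  "bessel_poly k a s t = (\<Sum>l\<le>k. pairings k l * s ^ (k - 2 * l) * Jt (a - real l) t)"

lemma sum_pairings_eq_bessel_poly_Suc:
  "(\<Sum>l\<le>k. pairings k l * (real (k - 2 * l) * s ^ (k - 2 * l - 1) * Jt (a - real l) t
                              + s ^ (k - 2 * l + 1) * Jt (a - real l + 1) t))
   = bessel_poly (Suc k) (a + 1) s t"
proof -
  define A1 where "A1 l = real (k - 2 * l) * pairings k l * s ^ (k - 2 * l - 1) * Jt (a - real l) t" for l
  define A2 where "A2 l = pairings k l * s ^ (k - 2 * l + 1) * Jt (a - real l + 1) t" for l
  have "bessel_poly (Suc k) (a + 1) s t = A2 0 + (\<Sum>l\<le>k. A1 l + A2 (Suc l))"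
  proof -
    have "pairings (Suc k) (Suc l) * s ^ (Suc k - 2 * Suc l) * Jt (a + 1 - real (Suc l)) t
        = A1 l + A2 (Suc l)" for l
      unfolding A1_def A2_def pairings_Suc_Suc_monomial by (simp add: algebra_simps)
    then show ?thesis
      unfolding bessel_poly_def sum.atMost_Suc_shift by (simp add: A2_def add.commute)
  qed
  also have "\<dots> = (\<Sum>l\<le>k. A1 l) + (\<Sum>l\<le>Suc k. A2 l)"
    unfolding sum.distrib sum.atMost_Suc_shift[of A2] by simp
  also have "(\<Sum>l\<le>Suc k. A2 l) = (\<Sum>l\<le>k. A2 l)"
    by (simp add: A2_def pairings_eq_0)
  finally show ?thesis
    by (simp add: A1_def A2_def sum.distrib[symmetric] algebra_simps)
qed

lemma has_real_derivative_monomial_Jt_polar: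
  fixes z w :: real
  assumes "-1 < w" "w < 1"
  defines "s \<equiv> z * w" and "t \<equiv> z * sqrt (1 - w\<^sup>2)"
  shows "((\<lambda>v. (z * v) ^ p * Jt a (z * sqrt (1 - v\<^sup>2))) has_real_derivative
           z * (real p * s ^ (p - 1) * Jt a t + s ^ (p + 1) * Jt (a + 1) t)) (at w)"
proof -
  have "1 - w\<^sup>2 > 0"
    using assms by (simp add: abs_square_less_1 abs_less_iff)
  then have root_pos: "sqrt (1 - w\<^sup>2) > 0"
    by simp
  have "((\<lambda>v. z * sqrt (1 - v\<^sup>2)) has_real_derivative - z * w / sqrt (1 - w\<^sup>2)) (at w)"
    using \<open>1 - w\<^sup>2 > 0\<close> by (auto intro!: derivative_eq_intros simp: field_simps)
  from DERIV_chain2[OF has_real_derivative_Jt this]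
  have "((\<lambda>v. Jt a (z * sqrt (1 - v\<^sup>2))) has_real_derivative
      - t * Jt (a + 1) t * (- z * w / sqrt (1 - w\<^sup>2))) (at w)"
    by (simp add: t_def)
  also have "- t * Jt (a + 1) t * (- z * w / sqrt (1 - w\<^sup>2)) = z * s * Jt (a + 1) t"
    using root_pos by (simp add: s_def t_def field_simps)
  finally have Jt_part: "((\<lambda>v. Jt a (z * sqrt (1 - v\<^sup>2))) has_real_derivative z * s * Jt (a + 1) t) (at w)" .
  have power_part: "((\<lambda>v. (z * v) ^ p) has_real_derivative real p * s ^ (p - 1) * z) (at w)"
    by (auto intro!: derivative_eq_intros simp: s_def)
  have "((\<lambda>v. (z * v) ^ p * Jt a (z * sqrt (1 - v\<^sup>2))) has_real_derivative
      real p * s ^ (p - 1) * z * Jt a t + z * s * Jt (a + 1) t * s ^ p) (at w)"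
    using DERIV_mult[OF power_part Jt_part] by (simp add: s_def t_def)
  then show ?thesis
    by (simp add: algebra_simps)
qed

lemma has_real_derivative_bessel_poly_polar:
  fixes z w :: real
  assumes "-1 < w" "w < 1"
  shows "((\<lambda>v. bessel_poly k a (z * v) (z * sqrt (1 - v\<^sup>2))) has_real_derivative
           z * bessel_poly (Suc k) (a + 1) (z * w) (z * sqrt (1 - w\<^sup>2))) (at w)"
proof -
  define s t where "s = z * w" and "t = z * sqrt (1 - w\<^sup>2)"
  have "((\<lambda>v. \<Sum>l\<le>k. pairings k l * ((z * v) ^ (k - 2 * l) * Jt (a - real l) (z * sqrt (1 - v\<^sup>2))))
      has_real_derivative (\<Sum>l\<le>k. pairings k l * (z * (real (k - 2 * l) * s ^ (k - 2 * l - 1)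
          * Jt (a - real l) t + s ^ (k - 2 * l + 1) * Jt (a - real l + 1) t)))) (at w)"
    unfolding s_def t_def
    by (intro DERIV_sum DERIV_cmult has_real_derivative_monomial_Jt_polar assms)
  also have "(\<Sum>l\<le>k. pairings k l * (z * (real (k - 2 * l) * s ^ (k - 2 * l - 1)
          * Jt (a - real l) t + s ^ (k - 2 * l + 1) * Jt (a - real l + 1) t)))
      = z * bessel_poly (Suc k) (a + 1) s t"
    by (simp only: sum_distrib_left mult.left_commute flip: sum_pairings_eq_bessel_poly_Suc)
  finally show ?thesis
    by (simp only: bessel_poly_def s_def t_def mult.assoc)
qed

lemma zdw_cmult_bessel_poly:
  assumes "z \<noteq> 0" "-1 < w" "w < 1"
  shows "zdw (\<lambda>s t. c * bessel_poly k a s t) w z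
       = c * bessel_poly (Suc k) (a + 1) (z * w) (z * sqrt (1 - w\<^sup>2))"
proof -
  have "deriv (\<lambda>v. c * bessel_poly k a (z * v) (z * sqrt (1 - v\<^sup>2))) w
      = c * (z * bessel_poly (Suc k) (a + 1) (z * w) (z * sqrt (1 - w\<^sup>2)))"
    by (intro DERIV_imp_deriv DERIV_cmult has_real_derivative_bessel_poly_polar assms)
  then show ?thesis
    using assms(1) by (simp add: zdw_def)
qed

lemma Gamma_of_nat_plus_1: "Gamma (real i + 1) = fact i"
  by (simp only: Gamma_fact add.commute[of "real i" 1])

lemma sum_pairings_fact:
  fixes f :: "nat \<Rightarrow> real"
  shows "(\<Sum>l = 0..k div 2. s ^ (k - 2 * l) * (1 / (2 ^ l * fact l)) * (fact k / fact (k - 2 * l)) * f l)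
       = (\<Sum>l\<le>k. pairings k l * s ^ (k - 2 * l) * f l)"
proof -
  have "s ^ (k - 2 * l) * (1 / (2 ^ l * fact l)) * (fact k / fact (k - 2 * l)) * f l
      = pairings k l * s ^ (k - 2 * l) * f l" if "l \<in> {..k div 2}" for l
    using that by (simp add: pairings_fact)
  then have "(\<Sum>l = 0..k div 2. s ^ (k - 2 * l) * (1 / (2 ^ l * fact l)) * (fact k / fact (k - 2 * l)) * f l)
      = (\<Sum>l\<le>k div 2. pairings k l * s ^ (k - 2 * l) * f l)"
    unfolding atLeast0AtMost by (rule sum.cong[OF refl])
  also have "\<dots> = (\<Sum>l\<le>k. pairings k l * s ^ (k - 2 * l) * f l)"
    by (rule sum.mono_neutral_left) (auto simp: pairings_eq_0)
  finally show ?thesis .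
qed

lemma fhat_eq_bessel_poly:
  "fhat n i s t = (-1) ^ (n div 2 + i) * sqrt (pi / 2) * bessel_poly i ((real n - 3) / 2) s t"
proof -
  have "s ^ (i - 2 * l) * (1 / (2 ^ l * fact l)) * (Gamma (real i + 1) / Gamma (real i + 1 - 2 * real l))
        * Jt ((real n - 2 * real l - 3) / 2) t
      = s ^ (i - 2 * l) * (1 / (2 ^ l * fact l)) * (fact i / fact (i - 2 * l))
        * Jt ((real n - 3) / 2 - real l) t" if "l \<in> {0..i div 2}" for l
  proof -
    have "real i + 1 - 2 * real l = real (i - 2 * l) + 1"
      using that by auto
    moreover have "(real n - 2 * real l - 3) / 2 = (real n - 3) / 2 - real l"
      by (simp add: field_simps)
    ultimately show ?thesis
      by (simp only: Gamma_of_nat_plus_1)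
  qed
  then have "(\<Sum>l = 0..i div 2. s ^ (i - 2 * l) * (1 / (2 ^ l * fact l))
        * (Gamma (real i + 1) / Gamma (real i + 1 - 2 * real l)) * Jt ((real n - 2 * real l - 3) / 2) t)
      = bessel_poly i ((real n - 3) / 2) s t"
    unfolding bessel_poly_def sum_pairings_fact[symmetric] by (rule sum.cong[OF refl])
  then show ?thesis
    unfolding fhat_def by (simp only:)
qed

lemma g_eq_bessel_poly: "g n i s t = sqrt (pi / 2) * bessel_poly i ((real n - 1) / 2) s t"
proof -
  have "s ^ (i - 2 * l) * (1 / (2 ^ l * fact l)) * (Gamma (real i + 1) / Gamma (real i + 1 - 2 * real l))
        * Jt ((real n - 2 * real l - 1) / 2) t
      = s ^ (i - 2 * l) * (1 / (2 ^ l * fact l)) * (fact i / fact (i - 2 * l))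
        * Jt ((real n - 1) / 2 - real l) t" if "l \<in> {0..i div 2}" for l
  proof -
    have "real i + 1 - 2 * real l = real (i - 2 * l) + 1"
      using that by auto
    moreover have "(real n - 2 * real l - 1) / 2 = (real n - 1) / 2 - real l"
      by (simp add: field_simps)
    ultimately show ?thesis
      by (simp only: Gamma_of_nat_plus_1)
  qed
  then have "(\<Sum>l = 0..i div 2. s ^ (i - 2 * l) * (1 / (2 ^ l * fact l))
        * (Gamma (real i + 1) / Gamma (real i + 1 - 2 * real l)) * Jt ((real n - 2 * real l - 1) / 2) t)
      = bessel_poly i ((real n - 1) / 2) s t"
    unfolding bessel_poly_def sum_pairings_fact[symmetric] by (rule sum.cong[OF refl])
  then show ?thesis
    unfolding g_def by (simp only:)
qed

lemma ftilde_Suc_eq_bessel_poly: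
  "ftilde n (Suc k) s t = - sqrt (pi / 2) * real (Suc k) * bessel_poly k ((real n - 3) / 2) s t"
proof -
  have "s ^ (Suc k - 1 - 2 * l) * (1 / (2 ^ l * fact l))
        * (Gamma (real (Suc k) + 1) / Gamma (real (Suc k) - 2 * real l))
        * Jt ((real n - 2 * real l - 3) / 2) t
      = real (Suc k) * (s ^ (k - 2 * l) * (1 / (2 ^ l * fact l)) * (fact k / fact (k - 2 * l))
        * Jt ((real n - 3) / 2 - real l) t)" if "l \<in> {0..(Suc k - 1) div 2}" for l
  proof -
    have "real (Suc k) - 2 * real l = real (k - 2 * l) + 1"
      using that by auto
    then have "Gamma (real (Suc k) + 1) / Gamma (real (Suc k) - 2 * real l)
        = real (Suc k) * (fact k / fact (k - 2 * l))"
      by (simp only: Gamma_of_nat_plus_1 fact_Suc of_nat_mult times_divide_eq_right)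
    moreover have "(real n - 2 * real l - 3) / 2 = (real n - 3) / 2 - real l"
      by (simp add: field_simps)
    ultimately show ?thesis
      by (simp only: diff_Suc_1 mult_ac)
  qed
  then have "(\<Sum>l = 0..(Suc k - 1) div 2. s ^ (Suc k - 1 - 2 * l) * (1 / (2 ^ l * fact l))
        * (Gamma (real (Suc k) + 1) / Gamma (real (Suc k) - 2 * real l))
        * Jt ((real n - 2 * real l - 3) / 2) t)
      = real (Suc k) * bessel_poly k ((real n - 3) / 2) s t"
    unfolding bessel_poly_def sum_distrib_left sum_pairings_fact[symmetric] diff_Suc_1
    by (rule sum.cong[OF refl])
  then show ?thesis
    unfolding ftilde_def by (simp only: mult.assoc)
qed

lemma fhat_Suc_eq_zdw:
  assumes "z \<noteq> 0" "-1 < w" "w < 1"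
  shows "fhat (n + 2) (Suc i) (z * w) (z * sqrt (1 - w\<^sup>2)) = zdw (fhat n i) w z"
proof -
  have index: "(real (n + 2) - 3) / 2 = (real n - 3) / 2 + 1"
    by (simp add: field_simps)
  have sign: "(n + 2) div 2 + Suc i = Suc (Suc (n div 2 + i))"
    by simp
  show ?thesis
    unfolding fhat_eq_bessel_poly[abs_def] zdw_cmult_bessel_poly[OF assms] index sign by simp
qed

lemma ftilde_Suc_eq_zdw:
  assumes "z \<noteq> 0" "-1 < w" "w < 1" and "0 < i"
  shows "ftilde (n + 2) (i + 1) (z * w) (z * sqrt (1 - w\<^sup>2))
       = (real i + 1) / real i * zdw (ftilde n i) w z"
proof -
  obtain k where i: "i = Suc k"
    using \<open>0 < i\<close> gr0_implies_Suc by blast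
  have index: "(real (n + 2) - 3) / 2 = (real n - 3) / 2 + 1"
    by (simp add: field_simps)
  show ?thesis
    unfolding i Suc_eq_plus1[symmetric] ftilde_Suc_eq_bessel_poly[abs_def]
      zdw_cmult_bessel_poly[OF assms(1-3)] index
    by (simp add: field_simps)
qed

lemma g_eq_zdw_ftilde:
  assumes "z \<noteq> 0" "-1 < w" "w < 1" and "0 < i"
  shows "g n i (z * w) (z * sqrt (1 - w\<^sup>2)) = - (1 / real i) * zdw (ftilde n i) w z"
proof -
  obtain k where i: "i = Suc k"
    using \<open>0 < i\<close> gr0_implies_Suc by blast
  have index: "(real n - 1) / 2 = (real n - 3) / 2 + 1"
    by (simp add: field_simps)
  show ?thesis
    unfolding i ftilde_Suc_eq_bessel_poly[abs_def] g_eq_bessel_poly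
      zdw_cmult_bessel_poly[OF assms(1-3)] index
    by (simp add: field_simps)
qed

lemma ftilde_1_eq_fhat_1:
  assumes "s \<noteq> 0"
  shows "ftilde n 1 s t = (-1) ^ (n div 2) * (1 / s) * fhat n 1 s t"
  using assms unfolding One_nat_def ftilde_Suc_eq_bessel_poly fhat_eq_bessel_poly
  by (simp add: bessel_poly_def pairings_eq_0 flip: power_add)

theorem proposition4p1:
  fixes m :: nat
  assumes "even m" and "m \<ge> 2"
  shows "(\<forall>i. 1 \<le> i \<and> i \<le> m - 2 \<longrightarrow>
            (\<forall>z w. z > 0 \<and> -1 < w \<and> w < 1 \<longrightarrow>
               (let s = z * w; t = z * sqrt (1 - w^2) in
                  ftilde (m + 2) (i + 1) s t = (real i + 1) / real i * zdw (ftilde m i) w z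
                \<and> fhat (m + 2) (i + 1) s t = zdw (fhat m i) w z
                \<and> g (m + 2) (i + 1) s t = - (1 / (real i + 1)) * zdw (ftilde (m + 2) (i + 1)) w z)))
       \<and> (\<forall>z w. z > 0 \<and> -1 < w \<and> w < 1 \<longrightarrow>
               (let s = z * w; t = z * sqrt (1 - w^2) in
                  fhat (m + 2) 1 s t = zdw (fhat m 0) w z
                \<and> g (m + 2) 1 s t = - zdw (ftilde (m + 2) 1) w z))
       \<and> (\<forall>s t. s \<noteq> 0 \<longrightarrow>
               ftilde (m + 2) 1 s t = (-1) ^ (m div 2 - 1) * (1 / s) * fhat (m + 2) 1 s t)"
proof -
  obtain q where "m div 2 = Suc q"
    using \<open>m \<ge> 2\<close> by (cases "m div 2") auto
  then have "(-1) ^ ((m + 2) div 2) = ((-1) ^ (m div 2 - 1) :: real)"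
    by simp
  then show ?thesis
    using fhat_Suc_eq_zdw ftilde_Suc_eq_zdw g_eq_zdw_ftilde ftilde_1_eq_fhat_1[of _ "m + 2"]
    by (auto simp: Let_def)
qed

end
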